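(* Assume that for every class $c\in[C]$ and every deterministic policy $u\in\mathcal U^c_D$, the matrix $\phi^{c,u}$ (as a Markov chain on $\mathcal S^c$) has exactly one recurrent communicating class. Then for every class $c$ and every (possibly randomized) policy $u\in\mathcal U^c$, the continuous-time Markov chain on $\mathcal S^c$ with generator $Q^{c,u}=\lambda^c(\phi^{c,u}-I)$ admits a unique stationary distribution $\eta^{c,u}\in\mathcal P(\mathcal S^c)$, and, from any initial state distribution, the distribution of the state at time $t$ of this chain (i.e., of a player of class $c$ using policy $u$) converges to $\eta^{c,u}$ as $t\to\infty$.
   Context: Class $c$ has a finite state set $\mathcal S^c$, nonempty finite admissible action sets $\mathcal A^c(s)$, $\mathcal A^c=\bigcup_s\mathcal A^c(s)$, a transition kernel $\phi^c(\cdot\mid s,a)\in\mathcal P(\mathcal S^c)$ and a rate $\lambda^c>0$. $\mathcal U^c$ is the set of maps $u:\mathcal S^c\to\mathcal P(\mathcal A^c)$ with $\mathrm{supp}(u(s))\subseteq\mathcal A^c(s)$; $\mathcal U^c_D\subset\mathcal U^c$ the deterministic ones (Dirac masses). For $u\in\mathcal U^c$, $\phi^{c,u}$ is the matrix with entries $\phi^{c,u}_{ss'}=\sum_{a'\in\mathcal A^c(s')}\phi^c(s\mid s',a')u(a'\mid s')$ (probability of moving from $s'$ to $s$); the chain with generator $Q^{c,u}$ jumps at rate $\lambda^c$ according to these probabilities. *)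

theory Defs
  imports "HOL-Analysis.Analysis"
begin

definition pdist :: "'s set \<Rightarrow> ('s \<Rightarrow> real) \<Rightarrow> bool" where
  "pdist S p \<longleftrightarrow> (\<forall>s\<in>S. 0 \<le> p s) \<and> (\<forall>s. s \<notin> S \<longrightarrow> p s = 0) \<and> sum p S = 1"

definition policy :: "'s set \<Rightarrow> ('s \<Rightarrow> 'a set) \<Rightarrow> ('s \<Rightarrow> 'a \<Rightarrow> real) \<Rightarrow> bool" where
  "policy S A u \<longleftrightarrow> (\<forall>s\<in>S. pdist (A s) (u s))"

definition det_policy :: "'s set \<Rightarrow> ('s \<Rightarrow> 'a set) \<Rightarrow> ('s \<Rightarrow> 'a \<Rightarrow> real) \<Rightarrow> bool" where
  "det_policy S A u \<longleftrightarrow> policy S A u \<and>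
     (\<forall>s\<in>S. \<exists>a\<in>A s. u s = (\<lambda>b. if b = a then 1 else 0))"

text \<open>Kernel convention: phi s' a s = phi(s | s', a).
  pol_matrix ... s s' = phi^{u}_{s s'} = probability of moving from s' to s.\<close>
definition pol_matrix :: "('s \<Rightarrow> 'a set) \<Rightarrow> ('s \<Rightarrow> 'a \<Rightarrow> 's \<Rightarrow> real) \<Rightarrow> ('s \<Rightarrow> 'a \<Rightarrow> real)
    \<Rightarrow> 's \<Rightarrow> 's \<Rightarrow> real" where
  "pol_matrix A phi u s s' = (\<Sum>a\<in>A s'. phi s' a s * u s' a)"

definition generator :: "real \<Rightarrow> ('s \<Rightarrow> 's \<Rightarrow> real) \<Rightarrow> 's \<Rightarrow> 's \<Rightarrow> real" where
  "generator lam P s s' = lam * (P s s' - (if s = s' then 1 else 0))"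

definition stationary :: "'s set \<Rightarrow> ('s \<Rightarrow> 's \<Rightarrow> real) \<Rightarrow> ('s \<Rightarrow> real) \<Rightarrow> bool" where
  "stationary S Q eta \<longleftrightarrow> pdist S eta \<and> (\<forall>s\<in>S. (\<Sum>s'\<in>S. Q s s' * eta s') = 0)"

definition mat_vec :: "'s set \<Rightarrow> ('s \<Rightarrow> 's \<Rightarrow> real) \<Rightarrow> ('s \<Rightarrow> real) \<Rightarrow> 's \<Rightarrow> real" where
  "mat_vec S P p = (\<lambda>s. if s \<in> S then (\<Sum>s'\<in>S. P s s' * p s') else 0)"

text \<open>Law at time t of the chain started from p0 that jumps at rate lam according to P
  (Poisson clock of rate lam; equals p0 multiplied by exp(t Q) with Q = lam (P - I)).\<close>
definition ctmc_dist :: "'s set \<Rightarrow> real \<Rightarrow> ('s \<Rightarrow> 's \<Rightarrow> real) \<Rightarrow> ('s \<Rightarrow> real) \<Rightarrow> real \<Rightarrow> 's \<Rightarrow> real" where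
  "ctmc_dist S lam P p0 t s =
     (\<Sum>n. exp (- lam * t) * (lam * t) ^ n / fact n * ((mat_vec S P ^^ n) p0) s)"

definition chain_step :: "'s set \<Rightarrow> ('s \<Rightarrow> 's \<Rightarrow> real) \<Rightarrow> 's \<Rightarrow> 's \<Rightarrow> bool" where
  "chain_step S P i j \<longleftrightarrow> i \<in> S \<and> j \<in> S \<and> P j i > 0"

definition reaches :: "'s set \<Rightarrow> ('s \<Rightarrow> 's \<Rightarrow> real) \<Rightarrow> 's \<Rightarrow> 's \<Rightarrow> bool" where
  "reaches S P = (chain_step S P)\<^sup>*\<^sup>*"

definition communicates :: "'s set \<Rightarrow> ('s \<Rightarrow> 's \<Rightarrow> real) \<Rightarrow> 's \<Rightarrow> 's \<Rightarrow> bool" where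
  "communicates S P i j \<longleftrightarrow> reaches S P i j \<and> reaches S P j i"

definition comm_class :: "'s set \<Rightarrow> ('s \<Rightarrow> 's \<Rightarrow> real) \<Rightarrow> 's set \<Rightarrow> bool" where
  "comm_class S P K \<longleftrightarrow> (\<exists>i\<in>S. K = {j\<in>S. communicates S P i j})"

text \<open>For a finite chain, a state is recurrent iff every state reachable from it leads back to it.\<close>
definition recurrent_state :: "'s set \<Rightarrow> ('s \<Rightarrow> 's \<Rightarrow> real) \<Rightarrow> 's \<Rightarrow> bool" where
  "recurrent_state S P i \<longleftrightarrow> i \<in> S \<and> (\<forall>j. reaches S P i j \<longrightarrow> reaches S P j i)"

definition recurrent_class :: "'s set \<Rightarrow> ('s \<Rightarrow> 's \<Rightarrow> real) \<Rightarrow> 's set \<Rightarrow> bool" where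
  "recurrent_class S P K \<longleftrightarrow> comm_class S P K \<and> (\<forall>i\<in>K. recurrent_state S P i)"

end

theory Submission
  imports Defs
begin

(* Choosing in every state one action that u plays with
  positive probability gives a deterministic policy each of whose transitions is also a transition
  under u, so the unique recurrent class of that policy provides a state r reachable under u from
  every state.  The law at time t is the Poisson mixture of the powers of the transition matrix P
  with parameter lambda t, and these mixtures form a semigroup in the parameter.  Reachability of r
  makes the unit-parameter mixture put mass at least delta > 0 on r from every initial state
  (Doeblin's condition), so each unit of time contracts the l1 distance of two distributions by
  the factor 1 - delta.  The laws therefore converge, uniformly in the initial distribution, to a
  limit that is the unique probability vector fixed by P, i.e. the unique stationary distribution
  of the generator lambda (P - I). *)

section \<open>Poisson weights\<close>

definition poisson_weight :: "real \<Rightarrow> nat \<Rightarrow> real" where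
  "poisson_weight t n = exp (- t) * t ^ n / fact n"

lemma poisson_weight_sums: "poisson_weight t sums 1"
proof -
  have "(\<lambda>n. exp (- t) * (t ^ n /\<^sub>R fact n)) sums (exp (- t) * exp t)"
    by (rule sums_mult[OF exp_converges])
  moreover have "poisson_weight t = (\<lambda>n. exp (- t) * (t ^ n /\<^sub>R fact n))"
    by (simp add: poisson_weight_def divide_inverse fun_eq_iff)
  ultimately show ?thesis
    by (simp add: exp_minus)
qed

lemma summable_abs_poisson_weight: "summable (\<lambda>n. \<bar>poisson_weight t n\<bar>)"
proof -
  have "summable (\<lambda>n. exp (- t) * (\<bar>t\<bar> ^ n /\<^sub>R fact n))"
    using exp_converges sums_summable summable_mult by blast
  moreover have "\<bar>poisson_weight t n\<bar> = exp (- t) * (\<bar>t\<bar> ^ n /\<^sub>R fact n)" for n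
    by (simp add: poisson_weight_def abs_mult power_abs divide_inverse)
  ultimately show ?thesis
    by simp
qed

lemma summable_poisson_weight_mult:
  assumes "\<And>n. \<bar>a n\<bar> \<le> B"
  shows "summable (\<lambda>n. \<bar>poisson_weight t n * a n\<bar>)"
proof (rule summable_comparison_test'[OF summable_mult2[OF summable_abs_poisson_weight]])
  show "norm \<bar>poisson_weight t n * a n\<bar> \<le> \<bar>poisson_weight t n\<bar> * B" for n
    by (simp add: abs_mult mult_left_mono assms)
qed

lemma poisson_weight_nonneg: "0 \<le> t \<Longrightarrow> 0 \<le> poisson_weight t n"
  by (simp add: poisson_weight_def)

lemma poisson_weight_pos: "0 < t \<Longrightarrow> 0 < poisson_weight t n"
  by (simp add: poisson_weight_def)

lemma poisson_weight_0: "poisson_weight 0 n = (if n = 0 then 1 else 0)"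
  by (simp add: poisson_weight_def)

lemma poisson_weight_convolution:
  "(\<Sum>i\<le>k. poisson_weight a i * poisson_weight b (k - i)) = poisson_weight (a + b) k"
proof -
  have "(\<Sum>i\<le>k. poisson_weight a i * poisson_weight b (k - i))
      = exp (- a) * exp (- b) * (\<Sum>i\<le>k. of_nat (k choose i) * a ^ i * b ^ (k - i)) / fact k"
    by (simp add: poisson_weight_def binomial_fact sum_distrib_left sum_divide_distrib field_simps)
  also have "\<dots> = poisson_weight (a + b) k"
    by (simp add: poisson_weight_def binomial_ring exp_add[symmetric])
  finally show ?thesis .
qed

section \<open>Generators and stationary distributions\<close>

lemma generator_mat_vec:
  assumes "finite S" and "s \<in> S"
  shows "(\<Sum>s'\<in>S. generator lam P s s' * v s') = lam * (mat_vec S P v s - v s)"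
proof -
  have "(\<Sum>s'\<in>S. generator lam P s s' * v s')
      = (\<Sum>s'\<in>S. lam * (P s s' * v s') - lam * ((if s = s' then 1 else 0) * v s'))"
    by (intro sum.cong) (simp_all add: generator_def algebra_simps)
  also have "\<dots> = lam * (\<Sum>s'\<in>S. P s s' * v s') - lam * (\<Sum>s'\<in>S. (if s = s' then 1 else 0) * v s')"
    by (simp add: sum_subtractf sum_distrib_left)
  also have "\<dots> = lam * (mat_vec S P v s - v s)"
    using assms by (simp add: mat_vec_def right_diff_distrib if_distrib[of "\<lambda>z. z * _"] cong: if_cong)
  finally show ?thesis .
qed

lemma stationary_generator_iff:
  assumes "finite S" and "lam \<noteq> 0"
  shows "stationary S (generator lam P) q \<longleftrightarrow> pdist S q \<and> mat_vec S P q = q"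
proof -
  have "(\<forall>s\<in>S. (\<Sum>s'\<in>S. generator lam P s s' * q s') = 0) \<longleftrightarrow> (\<forall>s\<in>S. mat_vec S P q s = q s)"
    using assms by (simp add: generator_mat_vec)
  moreover have "pdist S q \<Longrightarrow> (\<forall>s\<in>S. mat_vec S P q s = q s) \<longleftrightarrow> mat_vec S P q = q"
    by (auto simp: fun_eq_iff mat_vec_def pdist_def)
  ultimately show ?thesis
    unfolding stationary_def by blast
qed

section \<open>Reachability and recurrent classes\<close>

lemma reaches_in_S: "reaches S P i j \<Longrightarrow> i \<in> S \<Longrightarrow> j \<in> S"
  unfolding reaches_def by (induction rule: rtranclp_induct) (auto simp: chain_step_def)

lemma reaches_trans: "reaches S P i j \<Longrightarrow> reaches S P j k \<Longrightarrow> reaches S P i k"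
  unfolding reaches_def by (rule rtranclp_trans)

lemma reaches_refl: "reaches S P i i"
  unfolding reaches_def by simp

lemma reaches_mono:
  assumes "\<And>i j. chain_step S Q i j \<Longrightarrow> chain_step S P i j" and "reaches S Q i j"
  shows "reaches S P i j"
  using assms(2) unfolding reaches_def
  by (induction rule: rtranclp_induct) (auto intro: rtranclp.rtrancl_into_rtrancl assms(1))

lemma reaches_recurrent_state:
  assumes "finite S" and "i \<in> S"
  shows "\<exists>j. reaches S P i j \<and> recurrent_state S P j"
  using assms(2)
proof (induction "card {k. reaches S P i k}" arbitrary: i rule: less_induct)
  case less
  show ?case
  proof (cases "recurrent_state S P i")
    case True
    then show ?thesis using reaches_refl[of S P i] by blast
  next
    case False
    then obtain k where ik: "reaches S P i k" and ki: "\<not> reaches S P k i"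
      using less.prems by (auto simp: recurrent_state_def)
    have "{l. reaches S P k l} \<subset> {l. reaches S P i l}"
      using ik ki reaches_trans[OF ik] reaches_refl[of S P i] by auto
    moreover have "finite {l. reaches S P i l}"
      using reaches_in_S[OF _ less.prems] assms(1) by (auto intro: finite_subset)
    ultimately obtain j where "reaches S P k j" "recurrent_state S P j"
      using less.hyps[OF psubset_card_mono] reaches_in_S[OF ik less.prems] by blast
    then show ?thesis
      using reaches_trans[OF ik] by blast
  qed
qed

lemma recurrent_class_of_recurrent_state:
  assumes a: "recurrent_state S P a"
  shows "recurrent_class S P {j \<in> S. communicates S P a j}"
  unfolding recurrent_class_def comm_class_def
proof (intro conjI ballI)
  show "\<exists>i\<in>S. {j \<in> S. communicates S P a j} = {j \<in> S. communicates S P i j}"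
    using a by (auto simp: recurrent_state_def)
  fix i
  assume "i \<in> {j \<in> S. communicates S P a j}"
  then have i: "i \<in> S" "reaches S P a i" "reaches S P i a"
    by (auto simp: communicates_def)
  show "recurrent_state S P i"
    unfolding recurrent_state_def
  proof (intro conjI allI impI)
    show "i \<in> S" by (rule i(1))
    fix j
    assume "reaches S P i j"
    then have "reaches S P j a"
      using a reaches_trans[OF i(2)] by (auto simp: recurrent_state_def)
    then show "reaches S P j i"
      using reaches_trans[OF _ i(2)] by blast
  qed
qed

lemma unique_recurrent_class_imp_root:
  assumes "finite S" and "\<exists>!K. recurrent_class S P K"
  shows "\<exists>r\<in>S. \<forall>i\<in>S. reaches S P i r"
proof -
  obtain K where K: "recurrent_class S P K" and unique: "\<And>K'. recurrent_class S P K' \<Longrightarrow> K' = K"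
    using assms(2) by metis
  then obtain r where r: "r \<in> S" "K = {j \<in> S. communicates S P r j}"
    unfolding recurrent_class_def comm_class_def by blast
  have "reaches S P i r" if i: "i \<in> S" for i
  proof -
    obtain j where ij: "reaches S P i j" and j: "recurrent_state S P j"
      using reaches_recurrent_state[OF assms(1) i] by blast
    have "r \<in> {k \<in> S. communicates S P j k}"
      using unique[OF recurrent_class_of_recurrent_state[OF j]] r
      by (simp add: communicates_def reaches_refl)
    then show ?thesis
      using reaches_trans[OF ij] by (simp add: communicates_def)
  qed
  then show ?thesis
    using r(1) by blast
qed

section \<open>Poisson mixtures of a stochastic matrix\<close>

locale stochastic_matrix =
  fixes S :: "'s set" and P :: "'s \<Rightarrow> 's \<Rightarrow> real"
  assumes finite_S: "finite S"
    and nonneg: "\<And>i j. i \<in> S \<Longrightarrow> j \<in> S \<Longrightarrow> 0 \<le> P j i"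
    and column_sum: "\<And>i. i \<in> S \<Longrightarrow> (\<Sum>j\<in>S. P j i) = 1"
begin

abbreviation push :: "('s \<Rightarrow> real) \<Rightarrow> 's \<Rightarrow> real" where
  "push \<equiv> mat_vec S P"

definition supported :: "('s \<Rightarrow> real) \<Rightarrow> bool" where
  "supported v \<longleftrightarrow> (\<forall>s. s \<notin> S \<longrightarrow> v s = 0)"

definition l1 :: "('s \<Rightarrow> real) \<Rightarrow> real" where
  "l1 v = (\<Sum>s\<in>S. \<bar>v s\<bar>)"

lemma supported_push: "supported (push v)"
  by (simp add: supported_def mat_vec_def)

lemma supported_push_pow: "supported v \<Longrightarrow> supported ((push ^^ n) v)"
  by (cases n) (auto simp: supported_push)

lemma supported_indicator: "i \<in> S \<Longrightarrow> supported (indicator {i})"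
  by (auto simp: supported_def indicator_def)

lemma pdist_iff: "pdist S q \<longleftrightarrow> supported q \<and> (\<forall>s. 0 \<le> q s) \<and> sum q S = 1"
  unfolding pdist_def supported_def by (metis order_refl)

lemma supported_eq_sum_indicator: "supported v \<Longrightarrow> v = (\<lambda>s. \<Sum>l\<in>S. v l * indicator {l} s)"
  using finite_S by (auto simp: supported_def fun_eq_iff indicator_def Int_insert_right)

lemma push_sum_combination:
  assumes "finite I"
  shows "push (\<lambda>s. \<Sum>l\<in>I. c l * f l s) s = (\<Sum>l\<in>I. c l * push (f l) s)"
proof (cases "s \<in> S")
  case True
  have "push (\<lambda>s. \<Sum>l\<in>I. c l * f l s) s = (\<Sum>s'\<in>S. \<Sum>l\<in>I. c l * (P s s' * f l s'))"
    using True by (simp add: mat_vec_def sum_distrib_left algebra_simps)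
  also have "\<dots> = (\<Sum>l\<in>I. c l * push (f l) s)"
    using True by (subst sum.swap) (simp add: mat_vec_def sum_distrib_left)
  finally show ?thesis .
qed (simp add: mat_vec_def)

lemma push_pow_sum_combination:
  "finite I \<Longrightarrow> (push ^^ n) (\<lambda>s. \<Sum>l\<in>I. c l * f l s) = (\<lambda>s. \<Sum>l\<in>I. c l * (push ^^ n) (f l) s)"
proof (induction n)
  case (Suc n)
  show ?case by (rule ext) (simp add: Suc push_sum_combination)
qed simp

lemma push_diff: "push (\<lambda>s. v s - w s) = (\<lambda>s. push v s - push w s)"
  by (simp add: mat_vec_def fun_eq_iff algebra_simps sum_subtractf)

lemma push_pow_diff: "(push ^^ n) (\<lambda>s. v s - w s) = (\<lambda>s. (push ^^ n) v s - (push ^^ n) w s)"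
  by (induction n) (simp_all add: push_diff)

lemma push_pow_nonneg: "(\<And>s. 0 \<le> v s) \<Longrightarrow> 0 \<le> (push ^^ n) v s"
  by (induction n arbitrary: s) (auto simp: mat_vec_def intro!: sum_nonneg mult_nonneg_nonneg nonneg)

lemma sum_push: "(\<Sum>s\<in>S. push v s) = (\<Sum>s\<in>S. v s)"
proof -
  have "(\<Sum>s\<in>S. push v s) = (\<Sum>s'\<in>S. (\<Sum>s\<in>S. P s s') * v s')"
    by (simp add: mat_vec_def sum_distrib_right) (rule sum.swap)
  also have "\<dots> = (\<Sum>s\<in>S. v s)"
    by (simp add: column_sum)
  finally show ?thesis .
qed

lemma sum_push_pow: "(\<Sum>s\<in>S. (push ^^ n) v s) = (\<Sum>s\<in>S. v s)"
  by (induction n) (simp_all add: sum_push)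

lemma l1_push_le: "l1 (push v) \<le> l1 v"
proof -
  have "\<bar>push v s\<bar> \<le> (\<Sum>s'\<in>S. P s s' * \<bar>v s'\<bar>)" if "s \<in> S" for s
  proof -
    have "\<bar>push v s\<bar> \<le> (\<Sum>s'\<in>S. \<bar>P s s' * v s'\<bar>)"
      using that by (simp add: mat_vec_def sum_abs)
    also have "\<dots> = (\<Sum>s'\<in>S. P s s' * \<bar>v s'\<bar>)"
      using that by (intro sum.cong) (simp_all add: abs_mult nonneg)
    finally show ?thesis .
  qed
  then have "l1 (push v) \<le> (\<Sum>s\<in>S. \<Sum>s'\<in>S. P s s' * \<bar>v s'\<bar>)"
    unfolding l1_def by (rule sum_mono)
  also have "\<dots> = (\<Sum>s'\<in>S. (\<Sum>s\<in>S. P s s') * \<bar>v s'\<bar>)"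
    by (subst sum.swap) (simp add: sum_distrib_right)
  also have "\<dots> = l1 v"
    by (simp add: column_sum l1_def)
  finally show ?thesis .
qed

lemma l1_push_pow_le: "l1 ((push ^^ n) v) \<le> l1 v"
  by (induction n) (auto intro: order.trans[OF l1_push_le])

lemma abs_le_l1: "supported v \<Longrightarrow> \<bar>v s\<bar> \<le> l1 v"
  unfolding l1_def supported_def
  by (cases "s \<in> S") (auto intro: member_le_sum[where f="\<lambda>s. \<bar>v s\<bar>", OF _ _ finite_S] sum_nonneg)

lemma abs_push_pow_le_l1: "supported v \<Longrightarrow> \<bar>(push ^^ n) v s\<bar> \<le> l1 v"
  using abs_le_l1[OF supported_push_pow] l1_push_pow_le order.trans by blast

lemma push_pow_split:
  assumes "supported v" and "i \<le> k"
  shows "(\<Sum>l\<in>S. (push ^^ (k - i)) v l * (push ^^ i) (indicator {l}) s) = (push ^^ k) v s"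
proof -
  have "(push ^^ k) v = (push ^^ i) ((push ^^ (k - i)) v)"
    by (metis funpow_add comp_apply le_add_diff_inverse \<open>i \<le> k\<close>)
  also have "\<dots> = (push ^^ i) (\<lambda>s. \<Sum>l\<in>S. (push ^^ (k - i)) v l * indicator {l} s)"
    using supported_eq_sum_indicator[OF supported_push_pow[OF \<open>supported v\<close>]] by (rule arg_cong)
  also have "\<dots> = (\<lambda>s. \<Sum>l\<in>S. (push ^^ (k - i)) v l * (push ^^ i) (indicator {l}) s)"
    by (rule push_pow_sum_combination[OF finite_S])
  finally show ?thesis by simp
qed

lemma reaches_imp_push_pow_pos:
  assumes "i \<in> S" and "reaches S P i j"
  shows "\<exists>k. 0 < (push ^^ k) (indicator {i}) j"
  using \<open>reaches S P i j\<close> unfolding reaches_def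
proof (induction rule: rtranclp_induct)
  case base
  show ?case by (rule exI[of _ 0]) simp
next
  case (step y z)
  then obtain k where k: "0 < (push ^^ k) (indicator {i}) y" by blast
  have yz: "y \<in> S" "z \<in> S" "0 < P z y" using step(2) by (auto simp: chain_step_def)
  have "0 < P z y * (push ^^ k) (indicator {i}) y" using yz k by simp
  also have "\<dots> \<le> (\<Sum>s'\<in>S. P z s' * (push ^^ k) (indicator {i}) s')"
    by (rule member_le_sum[OF yz(1) _ finite_S])
       (use yz in \<open>auto intro!: mult_nonneg_nonneg nonneg push_pow_nonneg\<close>)
  also have "\<dots> = (push ^^ Suc k) (indicator {i}) z" using yz by (simp add: mat_vec_def)
  finally show ?case by blast
qed

definition poisson_mix :: "real \<Rightarrow> ('s \<Rightarrow> real) \<Rightarrow> 's \<Rightarrow> real" where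
  "poisson_mix t v s = (\<Sum>n. poisson_weight t n * (push ^^ n) v s)"

lemma ctmc_dist_eq_poisson_mix: "ctmc_dist S lam P v t = poisson_mix (lam * t) v"
  by (simp add: fun_eq_iff ctmc_dist_def poisson_mix_def poisson_weight_def)

lemma summable_abs_poisson_mix:
  "supported v \<Longrightarrow> summable (\<lambda>n. \<bar>poisson_weight t n * (push ^^ n) v s\<bar>)"
  by (rule summable_poisson_weight_mult[OF abs_push_pow_le_l1])

lemma summable_poisson_mix: "supported v \<Longrightarrow> summable (\<lambda>n. poisson_weight t n * (push ^^ n) v s)"
  by (rule summable_rabs_cancel[OF summable_abs_poisson_mix])

lemma poisson_mix_diff:
  "supported v \<Longrightarrow> supported w \<Longrightarrow> poisson_mix t (\<lambda>s. v s - w s) s = poisson_mix t v s - poisson_mix t w s"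
  unfolding poisson_mix_def push_pow_diff
  by (simp add: right_diff_distrib suminf_diff[OF summable_poisson_mix summable_poisson_mix])

lemma poisson_mix_sum_combination:
  assumes "finite I" and "\<And>l. l \<in> I \<Longrightarrow> supported (f l)"
  shows "poisson_mix t (\<lambda>s. \<Sum>l\<in>I. c l * f l s) s = (\<Sum>l\<in>I. c l * poisson_mix t (f l) s)"
proof -
  have "poisson_mix t (\<lambda>s. \<Sum>l\<in>I. c l * f l s) s
      = (\<Sum>n. \<Sum>l\<in>I. c l * (poisson_weight t n * (push ^^ n) (f l) s))"
    unfolding poisson_mix_def push_pow_sum_combination[OF assms(1)]
    by (simp add: sum_distrib_left algebra_simps)
  also have "\<dots> = (\<Sum>l\<in>I. \<Sum>n. c l * (poisson_weight t n * (push ^^ n) (f l) s))"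
    using assms by (intro suminf_sum summable_mult summable_poisson_mix) simp
  also have "\<dots> = (\<Sum>l\<in>I. c l * poisson_mix t (f l) s)"
    unfolding poisson_mix_def using assms by (intro sum.cong refl suminf_mult summable_poisson_mix) simp
  finally show ?thesis .
qed

lemma supported_poisson_mix: "supported v \<Longrightarrow> supported (poisson_mix t v)"
  using supported_push_pow by (simp add: supported_def poisson_mix_def)

lemma poisson_mix_nonneg: "0 \<le> t \<Longrightarrow> supported v \<Longrightarrow> (\<And>s. 0 \<le> v s) \<Longrightarrow> 0 \<le> poisson_mix t v s"
  unfolding poisson_mix_def
  by (intro suminf_nonneg summable_poisson_mix mult_nonneg_nonneg poisson_weight_nonneg push_pow_nonneg)

lemma sum_poisson_mix: "supported v \<Longrightarrow> (\<Sum>s\<in>S. poisson_mix t v s) = (\<Sum>s\<in>S. v s)"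
proof -
  assume v: "supported v"
  have "(\<Sum>s\<in>S. poisson_mix t v s) = (\<Sum>n. \<Sum>s\<in>S. poisson_weight t n * (push ^^ n) v s)"
    unfolding poisson_mix_def by (rule suminf_sum[symmetric]) (rule summable_poisson_mix[OF v])
  also have "\<dots> = (\<Sum>n. poisson_weight t n * (\<Sum>s\<in>S. v s))"
    by (simp only: sum_distrib_left[symmetric] sum_push_pow)
  also have "\<dots> = (\<Sum>s\<in>S. v s)"
    using sums_unique[OF sums_mult2[OF poisson_weight_sums]] by simp
  finally show ?thesis .
qed

lemma pdist_poisson_mix: "0 \<le> t \<Longrightarrow> pdist S q \<Longrightarrow> pdist S (poisson_mix t q)"
  by (simp add: pdist_iff supported_poisson_mix poisson_mix_nonneg sum_poisson_mix)

lemma pdist_push: "pdist S q \<Longrightarrow> pdist S (push q)"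
  by (simp add: pdist_iff supported_push sum_push push_pow_nonneg[where n=1, simplified])

lemma poisson_mix_fixed_point: "push v = v \<Longrightarrow> poisson_mix t v = v"
proof -
  assume "push v = v"
  then have "(push ^^ n) v = v" for n by (induction n) simp_all
  then show ?thesis
    using sums_unique[OF sums_mult2[OF poisson_weight_sums]] by (simp add: poisson_mix_def fun_eq_iff)
qed

lemma poisson_mix_0: "poisson_mix 0 v = v"
proof (rule ext)
  fix s
  have "poisson_weight 0 n * (push ^^ n) v s = (if n = 0 then (push ^^ n) v s else 0)" for n
    by (simp add: poisson_weight_0)
  then have "(\<lambda>n. poisson_weight 0 n * (push ^^ n) v s) sums v s"
    using sums_single[of 0 "\<lambda>n. (push ^^ n) v s"] by simp
  then show "poisson_mix 0 v s = v s"
    unfolding poisson_mix_def by (rule sums_unique[symmetric])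
qed

lemma push_poisson_mix: "supported v \<Longrightarrow> push (poisson_mix t v) = poisson_mix t (push v)"
proof (rule ext)
  fix s
  assume v: "supported v"
  show "push (poisson_mix t v) s = poisson_mix t (push v) s"
  proof (cases "s \<in> S")
    case True
    have "push (poisson_mix t v) s = (\<Sum>s'\<in>S. \<Sum>n. P s s' * (poisson_weight t n * (push ^^ n) v s'))"
      using True by (simp add: mat_vec_def poisson_mix_def suminf_mult[OF summable_poisson_mix[OF v]])
    also have "\<dots> = (\<Sum>n. \<Sum>s'\<in>S. P s s' * (poisson_weight t n * (push ^^ n) v s'))"
      by (rule suminf_sum[symmetric]) (intro summable_mult summable_poisson_mix[OF v])
    also have "\<dots> = (\<Sum>n. poisson_weight t n * push ((push ^^ n) v) s)"
      using True by (simp add: mat_vec_def sum_distrib_left algebra_simps)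
    also have "\<dots> = poisson_mix t (push v) s"
      by (simp only: poisson_mix_def funpow_swap1)
    finally show ?thesis .
  qed (use supported_poisson_mix[OF supported_push] in \<open>simp add: mat_vec_def supported_def\<close>)
qed

lemma poisson_mix_add:
  assumes v: "supported v"
  shows "poisson_mix (a + b) v = poisson_mix a (poisson_mix b v)"
proof (rule ext)
  fix j
  let ?x = "\<lambda>l i. poisson_weight a i * (push ^^ i) (indicator {l}) j"
  let ?y = "\<lambda>l k. poisson_weight b k * (push ^^ k) v l"
  have "poisson_mix a (poisson_mix b v) j
      = poisson_mix a (\<lambda>s. \<Sum>l\<in>S. poisson_mix b v l * indicator {l} s) j"
    by (rule arg_cong[OF supported_eq_sum_indicator[OF supported_poisson_mix[OF v]]])
  also have "\<dots> = (\<Sum>l\<in>S. poisson_mix b v l * poisson_mix a (indicator {l}) j)"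
    by (rule poisson_mix_sum_combination[OF finite_S supported_indicator])
  also have "\<dots> = (\<Sum>l\<in>S. poisson_mix a (indicator {l}) j * poisson_mix b v l)"
    by (simp add: mult.commute)
  finally have rhs: "poisson_mix a (poisson_mix b v) j
      = (\<Sum>l\<in>S. poisson_mix a (indicator {l}) j * poisson_mix b v l)" .
  have "(\<lambda>k. \<Sum>i\<le>k. ?x l i * ?y l (k - i))
      sums (poisson_mix a (indicator {l}) j * poisson_mix b v l)" if "l \<in> S" for l
    unfolding poisson_mix_def
    using summable_abs_poisson_mix[OF supported_indicator[OF that]] summable_abs_poisson_mix[OF v]
    by (intro Cauchy_product_sums) simp_all
  then have "(\<lambda>k. \<Sum>l\<in>S. \<Sum>i\<le>k. ?x l i * ?y l (k - i))
      sums (\<Sum>l\<in>S. poisson_mix a (indicator {l}) j * poisson_mix b v l)"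
    by (rule sums_sum)
  moreover have "(\<Sum>l\<in>S. \<Sum>i\<le>k. ?x l i * ?y l (k - i)) = poisson_weight (a + b) k * (push ^^ k) v j"
    for k
  proof -
    have "(\<Sum>l\<in>S. \<Sum>i\<le>k. ?x l i * ?y l (k - i))
      = (\<Sum>i\<le>k. poisson_weight a i * poisson_weight b (k - i)
                  * (\<Sum>l\<in>S. (push ^^ (k - i)) v l * (push ^^ i) (indicator {l}) j))"
      by (subst sum.swap) (simp add: sum_distrib_left algebra_simps)
    also have "\<dots> = poisson_weight (a + b) k * (push ^^ k) v j"
      by (simp add: push_pow_split[OF v] sum_distrib_right[symmetric] poisson_weight_convolution)
    finally show ?thesis .
  qed
  ultimately have "(\<lambda>k. poisson_weight (a + b) k * (push ^^ k) v j)
      sums poisson_mix a (poisson_mix b v) j"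
    by (simp add: rhs)
  then show "poisson_mix (a + b) v j = poisson_mix a (poisson_mix b v) j"
    unfolding poisson_mix_def by (rule sums_unique[symmetric])
qed

end

section \<open>Doeblin contraction and ergodicity\<close>

lemma tendsto_at_top_if_bounded_by_null:
  fixes f :: "real \<Rightarrow> real"
  assumes bound: "\<And>m t. real m \<le> t \<Longrightarrow> \<bar>f t - L\<bar> \<le> b m" and null: "b \<longlonglongrightarrow> 0"
  shows "(f \<longlongrightarrow> L) at_top"
  unfolding tendsto_iff
proof (intro allI impI)
  fix \<epsilon> :: real assume "\<epsilon> > 0"
  then obtain N where "b N < \<epsilon>"
    using order_tendstoD(2)[OF null] by (auto simp: eventually_sequentially)
  then show "\<forall>\<^sub>F t in at_top. dist (f t) L < \<epsilon>"
    unfolding eventually_at_top_linorder dist_real_def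
    using bound[of N] by (intro exI[of _ "real N"]) fastforce
qed

lemma pdist_indicator: "finite S \<Longrightarrow> i \<in> S \<Longrightarrow> pdist S (indicator {i})"
  by (auto simp: pdist_def indicator_def Int_insert_right)

lemma sum_abs_diff_le_if_common_mass:
  fixes u w :: "'s \<Rightarrow> real"
  assumes "finite S" and "r \<in> S"
    and "\<And>s. 0 \<le> u s" and "\<And>s. 0 \<le> w s"
    and "sum u S = a" and "sum w S = a" and "c \<le> u r" and "c \<le> w r"
  shows "(\<Sum>s\<in>S. \<bar>u s - w s\<bar>) \<le> 2 * a - 2 * c"
proof -
  have "(\<Sum>s\<in>S. \<bar>u s - w s\<bar>) = \<bar>u r - w r\<bar> + (\<Sum>s\<in>S - {r}. \<bar>u s - w s\<bar>)"
    using assms(1,2) by (rule sum.remove)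
  also have "\<dots> \<le> (u r + w r - 2 * c) + (\<Sum>s\<in>S - {r}. u s + w s)"
    using assms(3,4,7,8) by (intro add_mono sum_mono) (auto simp: abs_le_iff)
  also have "\<dots> = sum u S + sum w S - 2 * c"
    using sum.remove[OF assms(1,2), of u] sum.remove[OF assms(1,2), of w] by (simp add: sum.distrib)
  finally show ?thesis
    using assms(5,6) by simp
qed

locale rooted_stochastic_matrix = stochastic_matrix S P for S :: "'s set" and P +
  fixes r :: 's
  assumes root_in_S: "r \<in> S"
    and reaches_root: "\<And>i. i \<in> S \<Longrightarrow> reaches S P i r"
begin

lemma poisson_mix_indicator_root_pos: "i \<in> S \<Longrightarrow> 0 < poisson_mix 1 (indicator {i}) r"
proof -
  assume i: "i \<in> S"
  obtain k where k: "0 < (push ^^ k) (indicator {i}) r"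
    using reaches_imp_push_pow_pos[OF i reaches_root[OF i]] by blast
  show ?thesis
    unfolding poisson_mix_def
  proof (rule suminf_pos2[OF summable_poisson_mix[OF supported_indicator[OF i]]])
    show "0 \<le> poisson_weight 1 n * (push ^^ n) (indicator {i}) r" for n
      by (intro mult_nonneg_nonneg poisson_weight_nonneg push_pow_nonneg) simp_all
    show "0 < poisson_weight 1 k * (push ^^ k) (indicator {i}) r"
      by (intro mult_pos_pos poisson_weight_pos k) simp
  qed
qed

definition doeblin :: real where
  "doeblin = min (Min ((\<lambda>i. poisson_mix 1 (indicator {i}) r) ` S)) 1"

lemma doeblin_pos: "0 < doeblin"
proof -
  have "0 < Min ((\<lambda>i. poisson_mix 1 (indicator {i}) r) ` S)"
    using poisson_mix_indicator_root_pos finite_S root_in_S by (subst Min_gr_iff) auto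
  then show ?thesis
    by (simp add: doeblin_def)
qed

lemma doeblin_le_1: "doeblin \<le> 1"
  by (simp add: doeblin_def)

lemma doeblin_le: "i \<in> S \<Longrightarrow> doeblin \<le> poisson_mix 1 (indicator {i}) r"
  using finite_S by (auto simp: doeblin_def intro: min.coboundedI1)

lemma doeblin_minorization:
  assumes v: "supported v" and "\<And>s. 0 \<le> v s"
  shows "doeblin * sum v S \<le> poisson_mix 1 v r"
proof -
  have "doeblin * sum v S = (\<Sum>l\<in>S. v l * doeblin)"
    by (simp add: sum_distrib_right mult.commute)
  also have "\<dots> \<le> (\<Sum>l\<in>S. v l * poisson_mix 1 (indicator {l}) r)"
    by (intro sum_mono mult_left_mono doeblin_le assms)
  also have "\<dots> = poisson_mix 1 (\<lambda>s. \<Sum>l\<in>S. v l * indicator {l} s) r"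
    by (rule poisson_mix_sum_combination[OF finite_S supported_indicator, symmetric])
  also have "\<dots> = poisson_mix 1 v r"
    by (simp flip: supported_eq_sum_indicator[OF v])
  finally show ?thesis .
qed

lemma l1_poisson_mix_1_le:
  assumes v: "supported v" and mass: "sum v S = 0"
  shows "l1 (poisson_mix 1 v) \<le> (1 - doeblin) * l1 v"
proof -
  define v_pos where "v_pos s = max (v s) 0" for s
  define v_neg where "v_neg s = max (- v s) 0" for s
  define a where "a = sum v_pos S"
  have supp: "supported v_pos" "supported v_neg"
    using v by (auto simp: supported_def v_pos_def v_neg_def)
  have nonneg: "0 \<le> v_pos s" "0 \<le> v_neg s" for s
    by (auto simp: v_pos_def v_neg_def)
  have v_eq: "v = (\<lambda>s. v_pos s - v_neg s)"
    by (auto simp: v_pos_def v_neg_def fun_eq_iff)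
  have mass_neg: "sum v_neg S = a"
    using mass unfolding a_def by (subst (asm) v_eq) (simp add: sum_subtractf)
  have l1_v: "l1 v = 2 * a"
  proof -
    have "l1 v = sum (\<lambda>s. v_pos s + v_neg s) S"
      unfolding l1_def by (intro sum.cong) (auto simp: v_pos_def v_neg_def)
    then show ?thesis
      by (simp add: sum.distrib mass_neg a_def)
  qed
  have "l1 (poisson_mix 1 v) = (\<Sum>s\<in>S. \<bar>poisson_mix 1 v_pos s - poisson_mix 1 v_neg s\<bar>)"
    unfolding l1_def by (subst v_eq) (simp add: poisson_mix_diff[OF supp])
  also have "\<dots> \<le> 2 * a - 2 * (doeblin * a)"
    using doeblin_minorization[OF supp(1) nonneg(1)] doeblin_minorization[OF supp(2) nonneg(2)]
    by (intro sum_abs_diff_le_if_common_mass[OF finite_S root_in_S])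
       (simp_all add: poisson_mix_nonneg supp nonneg sum_poisson_mix mass_neg a_def)
  also have "\<dots> = (1 - doeblin) * l1 v"
    by (simp add: l1_v algebra_simps)
  finally show ?thesis .
qed

lemma l1_poisson_mix_nat_le:
  assumes v: "supported v" and mass: "sum v S = 0"
  shows "l1 (poisson_mix (real m) v) \<le> (1 - doeblin) ^ m * l1 v"
proof (induction m)
  case 0
  show ?case by (simp add: poisson_mix_0)
next
  case (Suc m)
  let ?w = "poisson_mix (real m) v"
  have "l1 (poisson_mix (real (Suc m)) v) = l1 (poisson_mix 1 ?w)"
    by (simp add: poisson_mix_add[OF v] add.commute)
  also have "\<dots> \<le> (1 - doeblin) * l1 ?w"
    using v mass by (intro l1_poisson_mix_1_le) (simp_all add: supported_poisson_mix sum_poisson_mix)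
  also have "\<dots> \<le> (1 - doeblin) * ((1 - doeblin) ^ m * l1 v)"
    using Suc doeblin_le_1 by (intro mult_left_mono) simp_all
  finally show ?case by simp
qed

lemma poisson_mix_dist_le:
  assumes q: "pdist S q" and q': "pdist S q'" and "real m \<le> t" and "real m \<le> t'"
  shows "\<bar>poisson_mix t q s - poisson_mix t' q' s\<bar> \<le> 2 * (1 - doeblin) ^ m"
proof -
  let ?p = "poisson_mix (t - real m) q" and ?p' = "poisson_mix (t' - real m) q'"
  define z where "z = (\<lambda>s. ?p s - ?p' s)"
  have p: "pdist S ?p" "pdist S ?p'"
    using assms by (simp_all add: pdist_poisson_mix)
  then have supp: "supported ?p" "supported ?p'" and supp_z: "supported z"
    by (auto simp: pdist_iff supported_def z_def)
  have "l1 z \<le> l1 ?p + l1 ?p'"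
    unfolding l1_def z_def sum.distrib[symmetric] by (intro sum_mono abs_triangle_ineq4)
  also have "\<dots> = 2"
    using p by (simp add: l1_def pdist_iff)
  finally have l1_z: "l1 z \<le> 2" .
  have "poisson_mix t q = poisson_mix (real m) ?p" "poisson_mix t' q' = poisson_mix (real m) ?p'"
    using q q' poisson_mix_add[of q "real m" "t - real m"] poisson_mix_add[of q' "real m" "t' - real m"]
    by (simp_all add: pdist_iff)
  then have "poisson_mix t q s - poisson_mix t' q' s = poisson_mix (real m) z s"
    by (simp add: z_def poisson_mix_diff[OF supp])
  also have "\<bar>\<dots>\<bar> \<le> l1 (poisson_mix (real m) z)"
    by (rule abs_le_l1[OF supported_poisson_mix[OF supp_z]])
  also have "\<dots> \<le> (1 - doeblin) ^ m * l1 z"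
    using p by (intro l1_poisson_mix_nat_le supp_z) (simp add: z_def sum_subtractf pdist_iff)
  also have "\<dots> \<le> (1 - doeblin) ^ m * 2"
    using l1_z doeblin_le_1 by (intro mult_left_mono) simp_all
  finally show ?thesis by simp
qed

definition limit_dist :: "'s \<Rightarrow> real" where
  "limit_dist s = lim (\<lambda>k. poisson_mix (real k) (indicator {r}) s)"

lemma geometric_bound_null: "(\<lambda>m. 2 * (1 - doeblin) ^ m) \<longlonglongrightarrow> 0"
  using doeblin_pos doeblin_le_1 by (intro tendsto_mult_right_zero LIMSEQ_realpow_zero) simp_all

lemma poisson_mix_root_limit: "(\<lambda>k. poisson_mix (real k) (indicator {r}) s) \<longlonglongrightarrow> limit_dist s"
proof -
  have "Cauchy (\<lambda>k. poisson_mix (real k) (indicator {r}) s)"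
  proof (rule metric_CauchyI)
    fix \<epsilon> :: real
    assume "0 < \<epsilon>"
    then obtain N where N: "2 * (1 - doeblin) ^ N < \<epsilon>"
      using order_tendstoD(2)[OF geometric_bound_null] by (auto simp: eventually_sequentially)
    have "dist (poisson_mix (real m) (indicator {r}) s) (poisson_mix (real n) (indicator {r}) s) < \<epsilon>"
      if "N \<le> m" "N \<le> n" for m n
    proof -
      have "\<bar>poisson_mix (real m) (indicator {r}) s - poisson_mix (real n) (indicator {r}) s\<bar>
          \<le> 2 * (1 - doeblin) ^ N"
        using that by (intro poisson_mix_dist_le pdist_indicator finite_S root_in_S) simp_all
      then show ?thesis
        using N by (simp add: dist_real_def)
    qed
    then show "\<exists>M. \<forall>m\<ge>M. \<forall>n\<ge>M.
        dist (poisson_mix (real m) (indicator {r}) s) (poisson_mix (real n) (indicator {r}) s) < \<epsilon>"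
      by blast
  qed
  then show ?thesis
    unfolding limit_dist_def by (simp add: Cauchy_convergent_iff convergent_LIMSEQ_iff)
qed

lemma tendsto_poisson_mix_limit_dist:
  assumes q: "pdist S q"
  shows "((\<lambda>t. poisson_mix t q s) \<longlongrightarrow> limit_dist s) at_top"
proof (rule tendsto_at_top_if_bounded_by_null[OF _ geometric_bound_null])
  fix m t
  assume "real m \<le> t"
  have "(\<lambda>k. \<bar>poisson_mix t q s - poisson_mix (real k) (indicator {r}) s\<bar>)
      \<longlonglongrightarrow> \<bar>poisson_mix t q s - limit_dist s\<bar>"
    by (intro tendsto_intros poisson_mix_root_limit)
  then show "\<bar>poisson_mix t q s - limit_dist s\<bar> \<le> 2 * (1 - doeblin) ^ m"
    by (rule LIMSEQ_le_const2, intro exI[of _ m] allI impI \<open>real m \<le> t\<close>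
        poisson_mix_dist_le[OF q pdist_indicator[OF finite_S root_in_S]]) simp
qed

lemma pdist_limit_dist: "pdist S limit_dist"
  unfolding pdist_iff
proof (intro conjI allI)
  let ?e = "\<lambda>k. poisson_mix (real k) (indicator {r})"
  have e: "pdist S (?e k)" for k
    by (simp add: pdist_poisson_mix pdist_indicator finite_S root_in_S)
  show "supported limit_dist"
    unfolding supported_def
  proof (intro allI impI)
    fix s
    assume "s \<notin> S"
    then have "(\<lambda>k. ?e k s) = (\<lambda>k. 0)"
      using e by (simp add: pdist_def)
    then show "limit_dist s = 0"
      using poisson_mix_root_limit[of s] by (simp add: LIMSEQ_const_iff)
  qed
  show "0 \<le> limit_dist s" for s
    using e by (intro LIMSEQ_le_const[OF poisson_mix_root_limit]) (simp add: pdist_iff)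
  have "(\<lambda>k. \<Sum>s\<in>S. ?e k s) \<longlonglongrightarrow> sum limit_dist S"
    by (intro tendsto_sum poisson_mix_root_limit)
  then show "sum limit_dist S = 1"
    using e by (simp add: pdist_def LIMSEQ_const_iff)
qed

lemma push_limit_dist: "push limit_dist = limit_dist"
proof (rule ext)
  fix s
  let ?q = "indicator {r}"
  have q: "pdist S ?q"
    by (rule pdist_indicator[OF finite_S root_in_S])
  have "((\<lambda>t. push (poisson_mix t ?q) s) \<longlongrightarrow> push limit_dist s) at_top"
    unfolding mat_vec_def by (cases "s \<in> S") (auto intro!: tendsto_intros tendsto_poisson_mix_limit_dist q)
  moreover have "((\<lambda>t. push (poisson_mix t ?q) s) \<longlongrightarrow> limit_dist s) at_top"
    unfolding push_poisson_mix[OF supported_indicator[OF root_in_S]]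
    by (intro tendsto_poisson_mix_limit_dist pdist_push q)
  ultimately show "push limit_dist s = limit_dist s"
    by (rule tendsto_unique[OF trivial_limit_at_top_linorder])
qed

lemma fixed_pdist_eq_limit_dist:
  assumes "pdist S q" and "push q = q"
  shows "q = limit_dist"
proof (rule ext)
  fix s
  have "((\<lambda>t::real. q s) \<longlongrightarrow> limit_dist s) at_top"
    using tendsto_poisson_mix_limit_dist[OF assms(1), of s] by (simp add: poisson_mix_fixed_point[OF assms(2)])
  then show "q s = limit_dist s"
    by (rule tendsto_unique[OF trivial_limit_at_top_linorder tendsto_const])
qed

theorem ctmc_ergodic:
  assumes "0 < lam"
  shows "stationary S (generator lam P) limit_dist"
    and "stationary S (generator lam P) q \<Longrightarrow> q = limit_dist"
    and "pdist S p0 \<Longrightarrow> ((\<lambda>t. ctmc_dist S lam P p0 t s) \<longlongrightarrow> limit_dist s) at_top"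
proof -
  have stationary_iff: "stationary S (generator lam P) q \<longleftrightarrow> pdist S q \<and> push q = q" for q
    using assms by (intro stationary_generator_iff finite_S) simp
  show "stationary S (generator lam P) limit_dist"
    unfolding stationary_iff using pdist_limit_dist push_limit_dist by simp
  show "stationary S (generator lam P) q \<Longrightarrow> q = limit_dist"
    unfolding stationary_iff by (simp add: fixed_pdist_eq_limit_dist)
  have time_change: "filterlim (\<lambda>t. lam * t) at_top at_top"
    by (rule filterlim_tendsto_pos_mult_at_top[OF tendsto_const assms filterlim_ident])
  show "((\<lambda>t. ctmc_dist S lam P p0 t s) \<longlongrightarrow> limit_dist s) at_top" if "pdist S p0"
    unfolding ctmc_dist_eq_poisson_mix
    by (rule filterlim_compose[OF tendsto_poisson_mix_limit_dist[OF that] time_change])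
qed

end

section \<open>Policies\<close>

lemma stochastic_matrix_pol_matrix:
  assumes "finite S" and "\<And>s. s \<in> S \<Longrightarrow> finite (A s)"
    and kernel: "\<And>s a. s \<in> S \<Longrightarrow> a \<in> A s \<Longrightarrow> pdist S (phi s a)"
    and u: "policy S A u"
  shows "stochastic_matrix S (pol_matrix A phi u)"
proof
  fix i j
  assume "i \<in> S" "j \<in> S"
  then show "0 \<le> pol_matrix A phi u j i"
    using kernel u unfolding pol_matrix_def policy_def pdist_def
    by (intro sum_nonneg mult_nonneg_nonneg) auto
next
  fix i
  assume i: "i \<in> S"
  have "(\<Sum>j\<in>S. pol_matrix A phi u j i) = (\<Sum>a\<in>A i. u i a * (\<Sum>j\<in>S. phi i a j))"
    unfolding pol_matrix_def by (subst sum.swap) (simp add: sum_distrib_left mult.commute)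
  also have "\<dots> = 1"
    using kernel[OF i] u i by (simp add: pdist_def policy_def)
  finally show "(\<Sum>j\<in>S. pol_matrix A phi u j i) = 1" .
qed (rule assms(1))

lemma det_policy_in_support:
  assumes "\<And>s. s \<in> S \<Longrightarrow> finite (A s)"
    and kernel: "\<And>s a. s \<in> S \<Longrightarrow> a \<in> A s \<Longrightarrow> pdist S (phi s a)"
    and u: "policy S A u"
  obtains d where "det_policy S A d"
    and "\<And>i j. chain_step S (pol_matrix A phi d) i j \<Longrightarrow> chain_step S (pol_matrix A phi u) i j"
proof -
  have "\<exists>a\<in>A s. 0 < u s a" if "s \<in> S" for s
  proof (rule ccontr)
    assume "\<not> ?thesis"
    then have "sum (u s) (A s) = 0"
      using u that by (intro sum.neutral) (force simp: policy_def pdist_def)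
    then show False
      using u that by (simp add: policy_def pdist_def)
  qed
  then obtain act where act: "\<And>s. s \<in> S \<Longrightarrow> act s \<in> A s \<and> 0 < u s (act s)"
    by metis
  define d where "d s = (\<lambda>b. if b = act s then 1 else 0 :: real)" for s
  have "det_policy S A d"
    using act assms(1) by (auto simp: det_policy_def policy_def pdist_def d_def)
  moreover have "chain_step S (pol_matrix A phi u) i j" if "chain_step S (pol_matrix A phi d) i j" for i j
  proof -
    have ij: "i \<in> S" "j \<in> S"
      using that by (simp_all add: chain_step_def)
    have "pol_matrix A phi d j i = phi i (act i) j"
      using act[OF ij(1)] assms(1)[OF ij(1)]
      by (simp add: pol_matrix_def d_def if_distrib[of "\<lambda>z. _ * z"] cong: if_cong)
    then have "0 < phi i (act i) j * u i (act i)"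
      using that act[OF ij(1)] by (simp add: chain_step_def)
    also have "\<dots> \<le> pol_matrix A phi u j i"
      unfolding pol_matrix_def using act[OF ij(1)] assms(1)[OF ij(1)] kernel[OF ij(1)] u ij
      by (intro member_le_sum[where f = "\<lambda>a. phi i a j * u i a"] mult_nonneg_nonneg)
         (auto simp: policy_def pdist_def)
    finally show ?thesis
      using ij by (simp add: chain_step_def)
  qed
  ultimately show ?thesis
    using that by blast
qed

theorem lemma2:
  fixes C :: nat
    and S :: "nat \<Rightarrow> 's set"
    and A :: "nat \<Rightarrow> 's \<Rightarrow> 'a set"
    and phi :: "nat \<Rightarrow> 's \<Rightarrow> 'a \<Rightarrow> 's \<Rightarrow> real"
    and lam :: "nat \<Rightarrow> real"
  assumes finS: "\<And>c. c \<in> {1..C} \<Longrightarrow> finite (S c)"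
    and finA: "\<And>c s. c \<in> {1..C} \<Longrightarrow> s \<in> S c \<Longrightarrow> finite (A c s) \<and> A c s \<noteq> {}"
    and kernel: "\<And>c s a. c \<in> {1..C} \<Longrightarrow> s \<in> S c \<Longrightarrow> a \<in> A c s \<Longrightarrow> pdist (S c) (phi c s a)"
    and rate: "\<And>c. c \<in> {1..C} \<Longrightarrow> lam c > 0"
    and unichain: "\<And>c u. c \<in> {1..C} \<Longrightarrow> det_policy (S c) (A c) u \<Longrightarrow>
         \<exists>!K. recurrent_class (S c) (pol_matrix (A c) (phi c) u) K"
  shows "\<forall>c\<in>{1..C}. \<forall>u. policy (S c) (A c) u \<longrightarrow>
           (\<exists>eta. stationary (S c) (generator (lam c) (pol_matrix (A c) (phi c) u)) eta
              \<and> (\<forall>eta'. stationary (S c) (generator (lam c) (pol_matrix (A c) (phi c) u)) eta' \<longrightarrow> eta' = eta)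
              \<and> (\<forall>p0. pdist (S c) p0 \<longrightarrow>
                   (\<forall>s\<in>S c. ((\<lambda>t. ctmc_dist (S c) (lam c) (pol_matrix (A c) (phi c) u) p0 t s)
                              \<longlongrightarrow> eta s) at_top)))"
proof (intro ballI allI impI)
  fix c u
  assume c: "c \<in> {1..C}" and u: "policy (S c) (A c) u"
  let ?P = "pol_matrix (A c) (phi c) u"
  obtain d where d: "det_policy (S c) (A c) d"
    and steps: "\<And>i j. chain_step (S c) (pol_matrix (A c) (phi c) d) i j \<Longrightarrow> chain_step (S c) ?P i j"
    by (rule det_policy_in_support[of "S c" "A c" "phi c" u]) (use finA[OF c] kernel[OF c] u in auto)
  obtain r where "r \<in> S c" and "\<And>i. i \<in> S c \<Longrightarrow> reaches (S c) ?P i r"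
    using unique_recurrent_class_imp_root[OF finS[OF c] unichain[OF c d]] reaches_mono[OF steps] by blast
  moreover have "stochastic_matrix (S c) ?P"
    using finS[OF c] finA[OF c] kernel[OF c] u by (intro stochastic_matrix_pol_matrix) simp_all
  ultimately interpret rooted_stochastic_matrix "S c" ?P r
    by (simp add: rooted_stochastic_matrix_def rooted_stochastic_matrix_axioms_def)
  show "\<exists>eta. stationary (S c) (generator (lam c) ?P) eta
      \<and> (\<forall>eta'. stationary (S c) (generator (lam c) ?P) eta' \<longrightarrow> eta' = eta)
      \<and> (\<forall>p0. pdist (S c) p0 \<longrightarrow> (\<forall>s\<in>S c. ((\<lambda>t. ctmc_dist (S c) (lam c) ?P p0 t s) \<longlongrightarrow> eta s) at_top))"
    by (intro exI[of _ limit_dist] conjI allI impI ballI) (simp_all add: ctmc_ergodic[OF rate[OF c]])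
qed

end
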